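(* For any integer $k\geq 1$, every strongly $k$-connected tournament $T$ on $n$ vertices contains a strongly $k$-connected spanning subgraph $D$ with $|E(D)|\leq (5k-2)n + \binom{5k}{2}$.
   Context: A tournament is an orientation of a complete simple graph. A digraph $D$ is strongly connected if for any two vertices $u,v$ there is a directed path from $u$ to $v$. A digraph $D$ is strongly $k$-connected if $|V(D)| \geq k+1$ and for every set $S \subseteq V(D)$ with $|S| \leq k-1$, the digraph $D - S$ is strongly connected. $E(D)$ is the arc set of $D$. *)

theory Defs
  imports Main
begin

definition digraph :: "'a set \<Rightarrow> ('a \<times> 'a) set \<Rightarrow> bool" where
  "digraph V E \<longleftrightarrow> finite V \<and> E \<subseteq> V \<times> V \<and> (\<forall>v. (v, v) \<notin> E)"

definition tournament :: "'a set \<Rightarrow> ('a \<times> 'a) set \<Rightarrow> bool" where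
  "tournament V E \<longleftrightarrow> digraph V E \<and>
     (\<forall>u\<in>V. \<forall>v\<in>V. u \<noteq> v \<longrightarrow> ((u, v) \<in> E \<longleftrightarrow> (v, u) \<notin> E))"

definition strongly_connected :: "'a set \<Rightarrow> ('a \<times> 'a) set \<Rightarrow> bool" where
  "strongly_connected V E \<longleftrightarrow>
     (\<forall>u\<in>V. \<forall>v\<in>V. (u, v) \<in> (E \<inter> (V \<times> V))\<^sup>*)"

definition del_verts :: "'a set \<Rightarrow> ('a \<times> 'a) set \<Rightarrow> 'a set \<Rightarrow> 'a set \<times> ('a \<times> 'a) set" where
  "del_verts V E S = (V - S, E \<inter> ((V - S) \<times> (V - S)))"

definition strongly_k_connected :: "nat \<Rightarrow> 'a set \<Rightarrow> ('a \<times> 'a) set \<Rightarrow> bool" where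
  "strongly_k_connected k V E \<longleftrightarrow> card V \<ge> k + 1 \<and>
     (\<forall>S. S \<subseteq> V \<and> card S \<le> k - 1 \<longrightarrow>
        strongly_connected (fst (del_verts V E S)) (snd (del_verts V E S)))"

end

theory Submission
  imports Defs
begin

text \<open>Rank the vertices of \<open>T\<close> by a median order, i.e.\ a bijection onto \<open>{..<n}\<close> with the
  maximum number of forward arcs. Moving a vertex past the \<open>t\<close> vertices following it shows
  that every vertex beats at least half of the \<open>t\<close> vertices following it and is beaten by at
  least half of the \<open>t\<close> vertices preceding it. Let \<open>D\<close> consist of the arcs joining vertices
  at distance at most \<open>3k - 2\<close> in the order, the arcs from every vertex to its first \<open>k\<close>
  out-neighbours and the arcs into every vertex from its last \<open>k\<close> in-neighbours; then
  \<open>|D| \<le> (5k - 2) n\<close>.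

  Delete a set \<open>S\<close> of fewer than \<open>k\<close> vertices and suppose that the set \<open>R\<close> of vertices
  reachable from \<open>u\<close> in \<open>D - S\<close> misses some vertex. Counting with the median property shows
  that the short arcs alone already lead from any vertex to every vertex at least \<open>3|S|\<close>
  positions later, so the first vertex of \<open>R\<close> and the last vertex outside \<open>R\<close> are less than
  \<open>3|S|\<close> apart. As \<open>T - S\<close> is strongly connected, some arc of \<open>T\<close> leaves \<open>R\<close>; the first
  out-arcs and last in-arcs in \<open>D\<close> pin both of its ends between these two vertices, so it is a
  short arc of \<open>D\<close>, which is absurd.\<close>

text \<open>The new position of the entry at position \<open>m\<close> when the entry at position \<open>p\<close> is moved
  forward to position \<open>q \<ge> p\<close>.\<close>

definition move :: "nat \<Rightarrow> nat \<Rightarrow> nat \<Rightarrow> nat" where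
  "move p q m = (if m = p then q else if p < m \<and> m \<le> q then m - 1 else m)"

lemma move_less_move_iff: "m \<noteq> p \<Longrightarrow> m' \<noteq> p \<Longrightarrow> move p q m < move p q m' \<longleftrightarrow> m < m'"
  by (auto simp: move_def)

lemma move_less_moved_iff: "p \<le> q \<Longrightarrow> m \<noteq> p \<Longrightarrow> move p q m < move p q p \<longleftrightarrow> m \<le> q"
  by (auto simp: move_def)

lemma moved_less_move_iff: "m \<noteq> p \<Longrightarrow> move p q p < move p q m \<longleftrightarrow> q < m"
  by (auto simp: move_def)

lemma bij_betw_move:
  assumes "p \<le> q" "q < n"
  shows "bij_betw (move p q) {..<n} {..<n}"
proof -
  have "inj_on (move p q) {..<n}"
    using assms(1) by (intro inj_onI) (auto simp: move_def split: if_splits)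
  moreover have "move p q ` {..<n} \<subseteq> {..<n}"
    using assms by (auto simp: move_def)
  ultimately show ?thesis
    using endo_inj_surj[of "{..<n}" "move p q"] by (simp add: bij_betw_def)
qed

definition reversed :: "nat \<Rightarrow> ('a \<Rightarrow> nat) \<Rightarrow> 'a \<Rightarrow> nat" where
  "reversed n f v = n - 1 - f v"

lemma bij_betw_reversed:
  assumes f: "bij_betw f V {..<n}"
  shows "bij_betw (reversed n f) V {..<n}"
proof -
  have "bij_betw (\<lambda>m. n - 1 - m) {..<n} {..<n}"
    by (rule bij_betw_byWitness[where f' = "\<lambda>m. n - 1 - m"]) fastforce+
  then have "bij_betw ((\<lambda>m. n - 1 - m) \<circ> f) V {..<n}"
    by (rule bij_betw_trans[OF f])
  then show ?thesis
    by (simp add: comp_def reversed_def[abs_def])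
qed

lemma card_converse: "card (R\<inverse>) = card R"
proof -
  have "R\<inverse> = prod.swap ` R"
    by auto
  then show ?thesis
    by (simp add: card_image)
qed

lemma rtrancl_leaves_set:
  assumes "(u, v) \<in> E\<^sup>*" "u \<in> R" "v \<notin> R"
  shows "\<exists>x y. (x, y) \<in> E \<and> x \<in> R \<and> y \<notin> R"
  using assms by (induction rule: rtrancl_induct) blast+

lemma rtrancl_Image_subset: "E \<subseteq> B \<times> B \<Longrightarrow> u \<in> B \<Longrightarrow> E\<^sup>* `` {u} \<subseteq> B"
  by (auto elim: rtrancl_induct)

lemma card_rank_less_le:
  fixes f :: "'a \<Rightarrow> 'b::linorder"
  assumes "finite Y" "inj_on f Y"
  shows "card {y \<in> Y. card {z \<in> Y. f z < f y} < k} \<le> k"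
proof -
  define rank where "rank y = card {z \<in> Y. f z < f y}" for y
  have rank_less: "rank y < rank y'" if "y \<in> Y" "f y < f y'" for y y'
    unfolding rank_def using assms(1) that by (intro psubset_card_mono) auto
  have "inj_on rank Y"
  proof (rule inj_onI)
    fix y y' assume "y \<in> Y" "y' \<in> Y" "rank y = rank y'"
    then show "y = y'"
      using rank_less assms(2) by (metis inj_onD less_irrefl linorder_neqE)
  qed
  then have "card {y \<in> Y. rank y < k} \<le> card {..<k}"
    by (intro card_inj_on_le) (auto intro: inj_on_subset)
  then show ?thesis
    by (simp add: rank_def)
qed

section \<open>Rankings of a tournament\<close>

definition forward_arcs :: "('a \<times> 'a) set \<Rightarrow> ('a \<Rightarrow> nat) \<Rightarrow> nat" where
  "forward_arcs T pos = card {(x, y) \<in> T. pos x < pos y}"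

definition card_at :: "('a \<Rightarrow> nat) \<Rightarrow> 'a set \<Rightarrow> nat set \<Rightarrow> nat" where
  "card_at pos Z I = card {v \<in> Z. pos v \<in> I}"

lemma card_at_empty [simp]: "card_at pos Z {} = 0"
  by (simp add: card_at_def)

definition window_arcs :: "('a \<times> 'a) set \<Rightarrow> ('a \<Rightarrow> nat) \<Rightarrow> nat \<Rightarrow> ('a \<times> 'a) set" where
  "window_arcs T pos w = {(x, y) \<in> T. pos x \<le> pos y + w \<and> pos y \<le> pos x + w}"

definition first_out_arcs :: "('a \<times> 'a) set \<Rightarrow> ('a \<Rightarrow> nat) \<Rightarrow> nat \<Rightarrow> ('a \<times> 'a) set" where
  "first_out_arcs T pos k = {(x, y) \<in> T. card {z. (x, z) \<in> T \<and> pos z < pos y} < k}"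

definition last_in_arcs :: "('a \<times> 'a) set \<Rightarrow> ('a \<Rightarrow> nat) \<Rightarrow> nat \<Rightarrow> ('a \<times> 'a) set" where
  "last_in_arcs T pos k = {(x, y) \<in> T. card {z. (z, y) \<in> T \<and> pos x < pos z} < k}"

definition sparse_subgraph :: "('a \<times> 'a) set \<Rightarrow> ('a \<Rightarrow> nat) \<Rightarrow> nat \<Rightarrow> ('a \<times> 'a) set" where
  "sparse_subgraph T pos k =
     window_arcs T pos (3 * k - 2) \<union> first_out_arcs T pos k \<union> last_in_arcs T pos k"

lemma sparse_subgraph_subset: "sparse_subgraph T pos k \<subseteq> T"
  by (auto simp: sparse_subgraph_def window_arcs_def first_out_arcs_def last_in_arcs_def)

definition window_cut ::
    "'a set \<Rightarrow> ('a \<times> 'a) set \<Rightarrow> ('a \<Rightarrow> nat) \<Rightarrow> nat \<Rightarrow> 'a set \<Rightarrow> 'a set \<Rightarrow> 'a set \<Rightarrow> bool" where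
  "window_cut V T pos w A S X \<longleftrightarrow>
     V = A \<union> S \<union> X \<and> A \<inter> S = {} \<and> A \<inter> X = {} \<and> S \<inter> X = {} \<and>
     window_arcs T pos w \<inter> A \<times> X = {}"

locale ranked_tournament =
  fixes V :: "'a set" and T :: "('a \<times> 'a) set" and n :: nat and pos :: "'a \<Rightarrow> nat"
  assumes tournament: "tournament V T" and bij_pos: "bij_betw pos V {..<n}"
begin

lemma finite_V: "finite V"
  using tournament by (simp add: tournament_def digraph_def)

lemma arcs_subset: "T \<subseteq> V \<times> V"
  using tournament by (simp add: tournament_def digraph_def)

lemma finite_T: "finite T"
  using finite_subset[OF arcs_subset] finite_V by blast

lemma arc_not_reversed: "(x, y) \<in> T \<Longrightarrow> (y, x) \<notin> T"
  using tournament arcs_subset unfolding tournament_def digraph_def by fastforce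

lemma arc_between: "x \<in> V \<Longrightarrow> y \<in> V \<Longrightarrow> x \<noteq> y \<Longrightarrow> (x, y) \<in> T \<or> (y, x) \<in> T"
  using tournament unfolding tournament_def by blast

lemma card_V: "card V = n"
  using bij_betw_same_card[OF bij_pos] by simp

lemma pos_less: "x \<in> V \<Longrightarrow> pos x < n"
  using bij_betwE[OF bij_pos] by blast

lemma inj_on_pos: "Z \<subseteq> V \<Longrightarrow> inj_on pos Z"
  using bij_pos by (auto simp: bij_betw_def intro: inj_on_subset)

lemma pos_eq_iff: "x \<in> V \<Longrightarrow> y \<in> V \<Longrightarrow> pos x = pos y \<longleftrightarrow> x = y"
  using inj_on_pos[of V] by (auto simp: inj_on_eq_iff)

text \<open>Reversing both the arcs and the ranking preserves all notions below and exchanges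
  successors with predecessors, so every statement comes with a mirror image for free.\<close>

lemma ranked_tournament_converse: "ranked_tournament V (T\<inverse>) n (reversed n pos)"
proof
  show "tournament V (T\<inverse>)"
    using tournament unfolding tournament_def digraph_def by blast
  show "bij_betw (reversed n pos) V {..<n}"
    by (rule bij_betw_reversed[OF bij_pos])
qed

lemma card_at_V: "I \<subseteq> {..<n} \<Longrightarrow> card_at pos V I = card I"
proof -
  assume "I \<subseteq> {..<n}"
  then have "I \<subseteq> pos ` V"
    using bij_betw_imp_surj_on[OF bij_pos] by simp
  then have "pos ` {v \<in> V. pos v \<in> I} = I"
    by blast
  then have "bij_betw pos {v \<in> V. pos v \<in> I} I"
    using bij_betw_subset[OF bij_pos, of "{v \<in> V. pos v \<in> I}" I] by auto
  then show ?thesis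
    unfolding card_at_def by (rule bij_betw_same_card)
qed

lemma card_at_le: "Z \<subseteq> V \<Longrightarrow> finite I \<Longrightarrow> card_at pos Z I \<le> card I"
proof -
  assume "Z \<subseteq> V" "finite I"
  then have "card (pos ` {v \<in> Z. pos v \<in> I}) \<le> card I"
    by (intro card_mono) auto
  moreover have "inj_on pos {v \<in> Z. pos v \<in> I}"
    using \<open>Z \<subseteq> V\<close> by (intro inj_on_pos) auto
  ultimately show ?thesis
    unfolding card_at_def by (simp add: card_image)
qed

lemma card_at_le_card: "Z \<subseteq> V \<Longrightarrow> card_at pos Z I \<le> card Z"
  unfolding card_at_def using finite_subset[OF _ finite_V] by (intro card_mono) auto

lemma card_at_eq_0_iff: "Z \<subseteq> V \<Longrightarrow> card_at pos Z I = 0 \<longleftrightarrow> (\<forall>z\<in>Z. pos z \<notin> I)"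
  unfolding card_at_def using finite_subset[OF _ finite_V] by auto

lemma card_at_Un:
  assumes "Z \<subseteq> V" "Z' \<subseteq> V" "Z \<inter> Z' = {}"
  shows "card_at pos (Z \<union> Z') I = card_at pos Z I + card_at pos Z' I"
proof -
  have "{v \<in> Z \<union> Z'. pos v \<in> I} = {v \<in> Z. pos v \<in> I} \<union> {v \<in> Z'. pos v \<in> I}"
    by auto
  moreover have "finite Z" "finite Z'"
    using assms finite_subset finite_V by blast+
  ultimately show ?thesis
    unfolding card_at_def using assms(3) by (simp add: card_Un_disjoint disjoint_iff)
qed

lemma card_at_Un_positions:
  assumes "Z \<subseteq> V" "I \<inter> J = {}"
  shows "card_at pos Z (I \<union> J) = card_at pos Z I + card_at pos Z J"
proof -
  have "{v \<in> Z. pos v \<in> I \<union> J} = {v \<in> Z. pos v \<in> I} \<union> {v \<in> Z. pos v \<in> J}"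
    by auto
  moreover have "finite Z"
    using assms finite_subset finite_V by blast
  ultimately show ?thesis
    unfolding card_at_def using assms(2) by (simp add: card_Un_disjoint disjoint_iff)
qed

lemma card_at_converse:
  assumes "Z \<subseteq> V"
  shows "card_at (reversed n pos) Z {p..<q} = card_at pos Z {n - q..<n - p}"
proof -
  have "reversed n pos v \<in> {p..<q} \<longleftrightarrow> pos v \<in> {n - q..<n - p}" if "v \<in> Z" for v
    using pos_less[of v] that assms by (auto simp: reversed_def)
  then show ?thesis
    unfolding card_at_def by (metis (mono_tags, lifting) Collect_cong)
qed

lemma card_at_split:
  assumes "Z \<subseteq> V" "p \<le> m" "m < q"
  shows "card_at pos Z {p..<q} = card_at pos Z {p..<m} + card_at pos Z {m} + card_at pos Z {Suc m..<q}"
proof -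
  have "{p..<q} = ({p..<m} \<union> {m}) \<union> {Suc m..<q}"
    using assms(2,3) by auto
  then have "card_at pos Z {p..<q} = card_at pos Z (({p..<m} \<union> {m}) \<union> {Suc m..<q})"
    by (simp only:)
  also have "\<dots> = card_at pos Z ({p..<m} \<union> {m}) + card_at pos Z {Suc m..<q}"
    using assms(1) by (intro card_at_Un_positions) auto
  also have "card_at pos Z ({p..<m} \<union> {m}) = card_at pos Z {p..<m} + card_at pos Z {m}"
    using assms(1) by (intro card_at_Un_positions) auto
  finally show ?thesis .
qed

lemma card_at_position_outside: "Z \<subseteq> V \<Longrightarrow> y \<in> V \<Longrightarrow> y \<notin> Z \<Longrightarrow> card_at pos Z {pos y} = 0"
  using pos_eq_iff by (auto simp: card_at_eq_0_iff)

lemma window_cut_card_at: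
  assumes cut: "window_cut V T pos w A S X" and I: "I \<subseteq> {..<n}"
  shows "card_at pos A I + card_at pos S I + card_at pos X I = card I"
proof -
  have V: "V = A \<union> S \<union> X" and disj: "A \<inter> S = {}" "A \<inter> X = {}" "S \<inter> X = {}"
    using cut by (simp_all add: window_cut_def)
  have "card I = card_at pos (A \<union> S \<union> X) I"
    using card_at_V[OF I] V by simp
  also have "\<dots> = card_at pos (A \<union> S) I + card_at pos X I"
    by (rule card_at_Un) (use V disj in auto)
  also have "card_at pos (A \<union> S) I = card_at pos A I + card_at pos S I"
    by (rule card_at_Un) (use V disj in auto)
  finally show ?thesis
    by simp
qed

lemma reversed_less_iff: "x \<in> V \<Longrightarrow> y \<in> V \<Longrightarrow> reversed n pos x < reversed n pos y \<longleftrightarrow> pos y < pos x"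
  using pos_less[of x] pos_less[of y] by (auto simp: reversed_def)

lemma window_arcs_converse: "window_arcs (T\<inverse>) (reversed n pos) w = (window_arcs T pos w)\<inverse>"
proof -
  have "reversed n pos y \<le> reversed n pos x + w \<and> reversed n pos x \<le> reversed n pos y + w \<longleftrightarrow>
      pos x \<le> pos y + w \<and> pos y \<le> pos x + w" if "(x, y) \<in> T" for x y
    using that arcs_subset pos_less[of x] pos_less[of y] by (auto simp: reversed_def)
  then show ?thesis
    unfolding window_arcs_def by auto
qed

lemma window_cut_converse:
  "window_cut V (T\<inverse>) (reversed n pos) w X S A \<longleftrightarrow> window_cut V T pos w A S X"
  unfolding window_cut_def window_arcs_converse by blast

lemma first_out_arcs_converse:
  "first_out_arcs (T\<inverse>) (reversed n pos) k = (last_in_arcs T pos k)\<inverse>"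
proof -
  have "{z. (z, x) \<in> T \<and> reversed n pos z < reversed n pos y} = {z. (z, x) \<in> T \<and> pos y < pos z}"
    if "y \<in> V" for x y
    using that arcs_subset reversed_less_iff by blast
  then show ?thesis
    unfolding first_out_arcs_def last_in_arcs_def using arcs_subset by auto
qed

lemma forward_arcs_converse:
  assumes "f ` V \<subseteq> {..<n}"
  shows "forward_arcs (T\<inverse>) f = forward_arcs T (reversed n f)"
proof -
  have "{(x, y) \<in> T\<inverse>. f x < f y} = {(x, y) \<in> T. reversed n f x < reversed n f y}\<inverse>"
    using assms arcs_subset by (fastforce simp: reversed_def)
  then show ?thesis
    unfolding forward_arcs_def by (simp add: card_converse)
qed

lemma card_window_arcs: "card (window_arcs T pos w) \<le> w * n"
proof -
  define lower where "lower e = (if pos (fst e) < pos (snd e) then e else prod.swap e)" for e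
  define later where "later x = {y \<in> V. pos y \<in> {pos x<..pos x + w}}" for x
  have "inj_on lower (window_arcs T pos w)"
    by (intro inj_onI) (auto simp: lower_def window_arcs_def split: if_splits dest: arc_not_reversed)
  moreover have "lower ` window_arcs T pos w \<subseteq> Sigma V later"
  proof
    fix e assume "e \<in> lower ` window_arcs T pos w"
    then obtain x y where xy: "(x, y) \<in> window_arcs T pos w" and e: "e = lower (x, y)"
      by auto
    then have V: "x \<in> V" "y \<in> V" and "x \<noteq> y"
      using arcs_subset arc_not_reversed by (auto simp: window_arcs_def)
    then have "pos x \<noteq> pos y"
      using pos_eq_iff by blast
    then show "e \<in> Sigma V later"
      using xy e V by (auto simp: lower_def later_def window_arcs_def)
  qed
  moreover have "finite (Sigma V later)"
    using finite_V by (simp add: later_def)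
  ultimately have "card (window_arcs T pos w) \<le> card (Sigma V later)"
    by (rule card_inj_on_le)
  also have "\<dots> = (\<Sum>x\<in>V. card_at pos V {pos x<..pos x + w})"
    using finite_V by (simp add: later_def card_at_def)
  also have "\<dots> \<le> (\<Sum>x\<in>V. w)"
    by (intro sum_mono order_trans[OF card_at_le]) auto
  finally show ?thesis
    using card_V by (simp add: mult.commute)
qed

lemma card_first_out_arcs: "card (first_out_arcs T pos k) \<le> k * n"
proof -
  define first where "first x = {y \<in> T `` {x}. card {z \<in> T `` {x}. pos z < pos y} < k}" for x
  have out_V: "T `` {x} \<subseteq> V" for x
    using arcs_subset by blast
  have "first_out_arcs T pos k \<subseteq> Sigma V first"
    unfolding first_out_arcs_def first_def using arcs_subset by auto
  moreover have fin: "finite (first x)" for x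
    using finite_subset[OF out_V finite_V] by (rule finite_subset[rotated]) (auto simp: first_def)
  ultimately have "card (first_out_arcs T pos k) \<le> (\<Sum>x\<in>V. card (first x))"
    using card_mono finite_V by (metis card_SigmaI finite_SigmaI)
  also have "\<dots> \<le> (\<Sum>x\<in>V. k)"
    unfolding first_def
    by (intro sum_mono card_rank_less_le finite_subset[OF out_V finite_V] inj_on_pos out_V)
  finally show ?thesis
    using card_V by (simp add: mult.commute)
qed

lemma card_last_in_arcs: "card (last_in_arcs T pos k) \<le> k * n"
proof -
  interpret rev: ranked_tournament V "T\<inverse>" n "reversed n pos"
    by (rule ranked_tournament_converse)
  show ?thesis
    using rev.card_first_out_arcs by (simp add: first_out_arcs_converse card_converse)
qed

lemma card_sparse_subgraph: "card (sparse_subgraph T pos k) \<le> (5 * k - 2) * n"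
proof -
  have "card (sparse_subgraph T pos k) \<le>
      card (window_arcs T pos (3 * k - 2)) + card (first_out_arcs T pos k) + card (last_in_arcs T pos k)"
    unfolding sparse_subgraph_def
    using card_Un_le[of "window_arcs T pos (3 * k - 2) \<union> first_out_arcs T pos k" "last_in_arcs T pos k"]
      card_Un_le[of "window_arcs T pos (3 * k - 2)" "first_out_arcs T pos k"]
    by linarith
  also have "\<dots> \<le> (3 * k - 2) * n + k * n + k * n"
    using card_window_arcs card_first_out_arcs card_last_in_arcs by (intro add_mono)
  also have "\<dots> = ((3 * k - 2) + k + k) * n"
    by (simp add: add_mult_distrib)
  also have "\<dots> \<le> (5 * k - 2) * n"
    by (intro mult_le_mono1) arith
  finally show ?thesis .
qed

lemma first_out_arc_avoiding:
  assumes S: "S \<subseteq> V" "card S < k" and xy: "(x, y) \<in> T" "y \<notin> S"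
  shows "\<exists>y'. (x, y') \<in> first_out_arcs T pos k \<and> y' \<notin> S \<and> pos y' \<le> pos y"
proof -
  obtain y' where y': "(x, y') \<in> T" "y' \<notin> S"
    and least: "\<forall>z. (x, z) \<in> T \<and> z \<notin> S \<longrightarrow> pos y' \<le> pos z"
    using ex_has_least_nat[of "\<lambda>z. (x, z) \<in> T \<and> z \<notin> S" y pos] xy by blast
  have "{z. (x, z) \<in> T \<and> pos z < pos y'} \<subseteq> S"
    using least by force
  then have "card {z. (x, z) \<in> T \<and> pos z < pos y'} < k"
    using card_mono[OF finite_subset[OF S(1) finite_V]] S(2) by (meson le_less_trans)
  then show ?thesis
    using y' least xy unfolding first_out_arcs_def by blast
qed

lemma last_in_arc_avoiding:
  assumes S: "S \<subseteq> V" "card S < k" and xy: "(x, y) \<in> T" "x \<notin> S"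
  shows "\<exists>x'. (x', y) \<in> last_in_arcs T pos k \<and> x' \<notin> S \<and> pos x \<le> pos x'"
proof -
  interpret rev: ranked_tournament V "T\<inverse>" n "reversed n pos"
    by (rule ranked_tournament_converse)
  obtain x' where x': "(y, x') \<in> first_out_arcs (T\<inverse>) (reversed n pos) k" "x' \<notin> S"
    and le: "reversed n pos x' \<le> reversed n pos x"
    using rev.first_out_arc_avoiding[OF S] xy by blast
  have "x \<in> V" "x' \<in> V"
    using xy x' arcs_subset by (auto simp: first_out_arcs_def)
  then have "pos x \<le> pos x'"
    using le reversed_less_iff by (meson not_le)
  then show ?thesis
    using x' by (auto simp: first_out_arcs_converse)
qed

lemma arc_leaving_closed_set:
  assumes S: "S \<subseteq> V" "card S < k" and R: "R \<subseteq> V - S"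
    and closed: "\<And>x y. x \<in> R \<Longrightarrow> y \<in> V - S \<Longrightarrow> (x, y) \<in> sparse_subgraph T pos k \<Longrightarrow> y \<in> R"
    and xy: "(x, y) \<in> T" "x \<in> R" "y \<in> V - S - R"
  shows "\<exists>r\<in>R. pos r \<le> pos y" and "\<exists>q\<in>V - S - R. pos x \<le> pos q"
proof -
  obtain y' where y': "(x, y') \<in> first_out_arcs T pos k" "y' \<notin> S" "pos y' \<le> pos y"
    using first_out_arc_avoiding[OF S] xy by blast
  then have "y' \<in> V"
    using arcs_subset by (auto simp: first_out_arcs_def)
  then have "y' \<in> R"
    using closed[OF xy(2)] y' by (auto simp: sparse_subgraph_def)
  then show "\<exists>r\<in>R. pos r \<le> pos y"
    using y'(3) by blast
  obtain x' where x': "(x', y) \<in> last_in_arcs T pos k" "x' \<notin> S" "pos x \<le> pos x'"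
    using last_in_arc_avoiding[OF S] xy R by blast
  then have "x' \<in> V"
    using arcs_subset by (auto simp: last_in_arcs_def)
  then have "x' \<in> V - S - R"
    using closed xy(3) x' by (auto simp: sparse_subgraph_def)
  then show "\<exists>q\<in>V - S - R. pos x \<le> pos q"
    using x'(3) by blast
qed

lemma move_forward_iff:
  assumes xy: "(x, y) \<in> T" and v: "v \<in> V" and q: "pos v \<le> q"
  shows "move (pos v) q (pos x) < move (pos v) q (pos y) \<longleftrightarrow>
    pos x < pos y \<and> \<not> (x = v \<and> pos y \<le> q) \<or> y = v \<and> pos v < pos x \<and> pos x \<le> q"
proof -
  have V: "x \<in> V" "y \<in> V" and "x \<noteq> y"
    using xy arcs_subset arc_not_reversed by auto
  consider "x = v" | "y = v" | "x \<noteq> v" "y \<noteq> v"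
    using \<open>x \<noteq> y\<close> by blast
  then show ?thesis
  proof cases
    case 1
    then have "pos y \<noteq> pos v"
      using V \<open>x \<noteq> y\<close> pos_eq_iff by blast
    then show ?thesis
      using 1 \<open>x \<noteq> y\<close> q moved_less_move_iff[of "pos y" "pos v" q] by auto
  next
    case 2
    then have "pos x \<noteq> pos v"
      using V \<open>x \<noteq> y\<close> pos_eq_iff by blast
    then show ?thesis
      using 2 q move_less_moved_iff[OF q, of "pos x"] by auto
  next
    case 3
    then have "pos x \<noteq> pos v" "pos y \<noteq> pos v"
      using V v pos_eq_iff by blast+
    then show ?thesis
      using 3 move_less_move_iff[of "pos x" "pos v" "pos y" q] by auto
  qed
qed

lemma forward_arcs_move:
  assumes v: "v \<in> V" and q: "pos v \<le> q"
  shows "forward_arcs T (move (pos v) q \<circ> pos) + card {y \<in> V. (v, y) \<in> T \<and> pos v < pos y \<and> pos y \<le> q}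
    = forward_arcs T pos + card {y \<in> V. (y, v) \<in> T \<and> pos v < pos y \<and> pos y \<le> q}"
proof -
  define F where "F = {(x, y) \<in> T. pos x < pos y}"
  define Out where "Out = Pair v ` {y \<in> V. (v, y) \<in> T \<and> pos v < pos y \<and> pos y \<le> q}"
  define In where "In = (\<lambda>y. (y, v)) ` {y \<in> V. (y, v) \<in> T \<and> pos v < pos y \<and> pos y \<le> q}"
  have sub: "F \<subseteq> T" "In \<subseteq> T"
    by (auto simp: F_def In_def)
  have moved: "{(x, y) \<in> T. (move (pos v) q \<circ> pos) x < (move (pos v) q \<circ> pos) y} = (F - Out) \<union> In"
    using move_forward_iff[OF _ v q] sub arcs_subset by (fastforce simp: F_def Out_def In_def)
  have fin: "finite F" "finite In"
    using finite_subset[OF sub(1) finite_T] finite_subset[OF sub(2) finite_T] .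
  have "Out \<subseteq> F" "In \<inter> F = {}"
    using arc_not_reversed by (auto simp: F_def Out_def In_def)
  then have "card ((F - Out) \<union> In) = card (F - Out) + card In"
    using fin by (intro card_Un_disjoint) auto
  moreover have "card (F - Out) + card Out = card F"
    using \<open>Out \<subseteq> F\<close> fin by (simp add: card_Diff_subset card_mono finite_subset)
  moreover have "card Out = card {y \<in> V. (v, y) \<in> T \<and> pos v < pos y \<and> pos y \<le> q}"
    unfolding Out_def by (rule card_image) (simp add: inj_on_def)
  moreover have "card In = card {y \<in> V. (y, v) \<in> T \<and> pos v < pos y \<and> pos y \<le> q}"
    unfolding In_def by (rule card_image) (simp add: inj_on_def)
  ultimately show ?thesis
    unfolding forward_arcs_def moved F_def by simp
qed

end

section \<open>Median orders\<close>

locale median_order = ranked_tournament +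
  assumes forward_arcs_le: "bij_betw f V {..<n} \<Longrightarrow> forward_arcs T f \<le> forward_arcs T pos"

lemma median_order_exists:
  assumes tournament: "tournament V T" and card: "card V = n"
  shows "\<exists>pos. median_order V T n pos"
proof -
  have "finite V" "T \<subseteq> V \<times> V"
    using tournament by (simp_all add: tournament_def digraph_def)
  then have "finite T"
    using finite_subset by blast
  obtain f where "bij_betw f V {..<n}"
    using ex_bij_betw_finite_nat[OF \<open>finite V\<close>] card by (auto simp: atLeast0LessThan)
  moreover have "forward_arcs T g < Suc (card T)" for g
    unfolding forward_arcs_def less_Suc_eq_le using \<open>finite T\<close> by (intro card_mono) auto
  ultimately obtain pos where "bij_betw pos V {..<n}"
    and "\<forall>g. bij_betw g V {..<n} \<longrightarrow> forward_arcs T g \<le> forward_arcs T pos"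
    using ex_has_greatest_nat[of "\<lambda>g. bij_betw g V {..<n}" f "forward_arcs T"] by blast
  then show ?thesis
    using tournament by (auto intro!: median_order.intro ranked_tournament.intro median_order_axioms.intro)
qed

context median_order
begin

lemma out_neighbours_after:
  assumes v: "v \<in> V" and t: "pos v + t < n"
  shows "t \<le> 2 * card {y \<in> V. (v, y) \<in> T \<and> pos v < pos y \<and> pos y \<le> pos v + t}"
proof -
  define M where "M = {y \<in> V. pos v < pos y \<and> pos y \<le> pos v + t}"
  define Out where "Out = {y \<in> V. (v, y) \<in> T \<and> pos v < pos y \<and> pos y \<le> pos v + t}"
  define In where "In = {y \<in> V. (y, v) \<in> T \<and> pos v < pos y \<and> pos y \<le> pos v + t}"
  have "{pos v<..pos v + t} \<subseteq> {..<n}"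
    using t by auto
  then have "card M = t"
    using card_at_V[of "{pos v<..pos v + t}"] by (simp add: card_at_def M_def)
  moreover have "M = Out \<union> In" "Out \<inter> In = {}" "finite M"
    using v arc_between arc_not_reversed finite_V by (auto simp: M_def Out_def In_def)
  ultimately have "card Out + card In = t"
    by (metis card_Un_disjoint finite_Un)
  moreover have "card In \<le> card Out"
  proof -
    have "bij_betw (move (pos v) (pos v + t) \<circ> pos) V {..<n}"
      using bij_betw_trans[OF bij_pos bij_betw_move] t by simp
    then have "forward_arcs T (move (pos v) (pos v + t) \<circ> pos) \<le> forward_arcs T pos"
      by (rule forward_arcs_le)
    then show ?thesis
      using forward_arcs_move[OF v, of "pos v + t"] by (simp add: Out_def In_def)
  qed
  ultimately show ?thesis
    by (simp add: Out_def)
qed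

lemma median_order_converse: "median_order V (T\<inverse>) n (reversed n pos)"
proof -
  interpret rev: ranked_tournament V "T\<inverse>" n "reversed n pos"
    by (rule ranked_tournament_converse)
  show ?thesis
  proof (intro median_order.intro median_order_axioms.intro)
    show "ranked_tournament V (T\<inverse>) n (reversed n pos)"
      by (rule ranked_tournament_converse)
  next
    fix f assume f: "bij_betw f V {..<n}"
    have "forward_arcs (T\<inverse>) f = forward_arcs T (reversed n f)"
      using f by (intro forward_arcs_converse) (auto dest: bij_betwE)
    also have "\<dots> \<le> forward_arcs T pos"
      by (rule forward_arcs_le[OF bij_betw_reversed[OF f]])
    also have "\<dots> = forward_arcs (T\<inverse>) (reversed n pos)"
      using rev.forward_arcs_converse[of pos] pos_less by auto
    finally show "forward_arcs (T\<inverse>) f \<le> forward_arcs (T\<inverse>) (reversed n pos)" .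
  qed
qed

lemma in_neighbours_before:
  assumes v: "v \<in> V" and t: "t \<le> pos v"
  shows "t \<le> 2 * card {x \<in> V. (x, v) \<in> T \<and> pos v - t \<le> pos x \<and> pos x < pos v}"
proof -
  interpret rev: median_order V "T\<inverse>" n "reversed n pos"
    by (rule median_order_converse)
  have reversed_interval_iff:
    "reversed n pos v < reversed n pos x \<and> reversed n pos x \<le> reversed n pos v + t \<longleftrightarrow>
      pos v - t \<le> pos x \<and> pos x < pos v" if "x \<in> V" for x
    using pos_less[OF that] pos_less[OF v] t by (auto simp: reversed_def)
  have "t \<le> 2 * card {x \<in> V. (v, x) \<in> T\<inverse> \<and> reversed n pos v < reversed n pos x \<and>
      reversed n pos x \<le> reversed n pos v + t}"
    using rev.out_neighbours_after[OF v] t pos_less[OF v] by (simp add: reversed_def)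
  also have "{x \<in> V. (v, x) \<in> T\<inverse> \<and> reversed n pos v < reversed n pos x \<and>
      reversed n pos x \<le> reversed n pos v + t} = {x \<in> V. (x, v) \<in> T \<and> pos v - t \<le> pos x \<and> pos x < pos v}"
    using reversed_interval_iff by auto
  finally show ?thesis .
qed

section \<open>Reachability along short arcs\<close>

text \<open>At least half of the last \<open>t = min (pos x - p) w\<close> predecessors of \<open>x\<close> are in-neighbours
  of \<open>x\<close>. They are not in \<open>A\<close>, as no short arc leads from \<open>A\<close> to \<open>X\<close>, nor, by the run
  hypothesis, in \<open>X\<close>; so they lie in \<open>S\<close>. As \<open>2 |S| < w\<close>, this forces \<open>t = pos x - p\<close>, and
  then \<open>S\<close> fills at least half of the run.\<close>

lemma window_cut_run:
  assumes cut: "window_cut V T pos w A S X" and small: "2 * card S < w"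
    and x: "x \<in> X" "p \<le> pos x" and run: "\<forall>y\<in>X. pos y \<notin> {p..<pos x}"
  shows "card_at pos A {p..<pos x} \<le> card_at pos S {p..<pos x}"
proof -
  have sub: "A \<subseteq> V" "S \<subseteq> V" "X \<subseteq> V" and V: "V = A \<union> S \<union> X"
    using cut by (auto simp: window_cut_def)
  have "x \<in> V"
    using x sub by blast
  define t where "t = min (pos x - p) w"
  define N where "N = {y \<in> V. (y, x) \<in> T \<and> pos x - t \<le> pos y \<and> pos y < pos x}"
  have "t \<le> 2 * card N"
    unfolding N_def by (rule in_neighbours_before[OF \<open>x \<in> V\<close>]) (simp add: t_def)
  moreover have "N \<subseteq> {y \<in> S. pos y \<in> {pos x - t..<pos x}}"
  proof safe
    fix y assume y: "y \<in> N"
    then have "(y, x) \<in> window_arcs T pos w"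
      by (auto simp: N_def window_arcs_def t_def)
    then have "y \<notin> A"
      using cut x(1) by (auto simp: window_cut_def)
    moreover have "y \<notin> X"
      using run y by (auto simp: N_def t_def)
    ultimately show "y \<in> S"
      using y V by (auto simp: N_def)
  qed (auto simp: N_def)
  then have "card N \<le> card_at pos S {pos x - t..<pos x}"
    unfolding card_at_def using finite_subset[OF sub(2) finite_V] by (intro card_mono) auto
  ultimately have "t \<le> 2 * card_at pos S {pos x - t..<pos x}"
    by linarith
  moreover have "card_at pos S {pos x - t..<pos x} \<le> card S"
    using sub(2) by (rule card_at_le_card)
  ultimately have "t < w"
    using small by linarith
  then have t: "t = pos x - p"
    by (auto simp: t_def min_def split: if_splits)
  have "card_at pos A {p..<pos x} + card_at pos S {p..<pos x} + card_at pos X {p..<pos x} = pos x - p"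
    using window_cut_card_at[OF cut, of "{p..<pos x}"] pos_less[OF \<open>x \<in> V\<close>] by fastforce
  moreover have "card_at pos X {p..<pos x} = 0"
    using run sub(3) by (simp add: card_at_eq_0_iff)
  ultimately show ?thesis
    using \<open>t \<le> 2 * card_at pos S {pos x - t..<pos x}\<close> t x(2) by simp
qed

lemma window_cut_left:
  assumes cut: "window_cut V T pos w A S X" and small: "2 * card S < w"
    and x: "x \<in> X" "p \<le> pos x"
  shows "card_at pos A {p..<pos x} \<le> card_at pos S {p..<pos x}"
  using x(2)
proof (induction "pos x - p" arbitrary: p rule: less_induct)
  case less
  have sub: "A \<subseteq> V" "S \<subseteq> V" "X \<subseteq> V" and disj: "A \<inter> X = {}" "S \<inter> X = {}"
    using cut by (auto simp: window_cut_def)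
  show ?case
  proof (cases "\<exists>y\<in>X. pos y \<in> {p..<pos x}")
    case False
    then show ?thesis
      using window_cut_run[OF cut small x(1) less.prems] by blast
  next
    case True
    then obtain y where y: "y \<in> X" "pos y \<in> {p..<pos x}"
      and first: "\<forall>z. z \<in> X \<and> pos z \<in> {p..<pos x} \<longrightarrow> pos y \<le> pos z"
      using ex_has_least_nat[of "\<lambda>z. z \<in> X \<and> pos z \<in> {p..<pos x}" _ pos] by blast
    have "card_at pos A {p..<pos y} \<le> card_at pos S {p..<pos y}"
      using y first by (intro window_cut_run[OF cut small y(1)]) auto
    moreover have "card_at pos A {Suc (pos y)..<pos x} \<le> card_at pos S {Suc (pos y)..<pos x}"
      using y by (intro less.hyps) auto
    moreover have "card_at pos A {pos y} = 0" "card_at pos S {pos y} = 0"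
      using y(1) sub disj by (auto intro!: card_at_position_outside)
    ultimately show ?thesis
      using card_at_split[OF sub(1), of p "pos y" "pos x"] card_at_split[OF sub(2), of p "pos y" "pos x"] y(2)
      by simp
  qed
qed

lemma window_cut_right:
  assumes cut: "window_cut V T pos w A S X" and small: "2 * card S < w"
    and a: "a \<in> A" "pos a < q" "q \<le> n"
  shows "card_at pos X {Suc (pos a)..<q} \<le> card_at pos S {Suc (pos a)..<q}"
proof -
  interpret rev: median_order V "T\<inverse>" n "reversed n pos"
    by (rule median_order_converse)
  have sub: "X \<subseteq> V" "S \<subseteq> V" "a \<in> V"
    using cut a(1) by (auto simp: window_cut_def)
  have "card_at (reversed n pos) X {n - q..<reversed n pos a}
      \<le> card_at (reversed n pos) S {n - q..<reversed n pos a}"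
    using cut a by (intro rev.window_cut_left[OF _ small]) (auto simp: window_cut_converse reversed_def)
  moreover have "n - reversed n pos a = Suc (pos a)" "n - (n - q) = q"
    using pos_less[OF sub(3)] a(3) by (auto simp: reversed_def)
  ultimately show ?thesis
    using sub by (simp add: card_at_converse)
qed

text \<open>If \<open>v\<close> were not reachable, then on the positions \<open>[pos u, pos v]\<close> the vertices reachable
  from \<open>u\<close>, those of \<open>S\<close>, and the remaining ones would each number at most \<open>card S\<close>.\<close>

lemma window_reach:
  assumes S: "S \<subseteq> V" and small: "2 * card S < w"
    and u: "u \<in> V - S" and v: "v \<in> V - S" and far: "pos u + 3 * card S \<le> pos v"
  shows "(u, v) \<in> (window_arcs T pos w \<inter> (V - S) \<times> (V - S))\<^sup>*"
proof (rule ccontr)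
  define W where "W = window_arcs T pos w \<inter> (V - S) \<times> (V - S)"
  define A where "A = W\<^sup>* `` {u}"
  define X where "X = V - S - A"
  assume "(u, v) \<notin> (window_arcs T pos w \<inter> (V - S) \<times> (V - S))\<^sup>*"
  then have "v \<in> X" "u \<in> A"
    using v by (auto simp: X_def A_def W_def)
  have "A \<subseteq> V - S"
    unfolding A_def W_def using u by (intro rtrancl_Image_subset) auto
  then have cut: "window_cut V T pos w A S X"
    using S by (auto simp: window_cut_def X_def A_def W_def intro: rtrancl_into_rtrancl)
  have XV: "X \<subseteq> V" "A \<subseteq> V"
    using \<open>A \<subseteq> V - S\<close> by (auto simp: X_def)
  have uv: "pos u \<le> pos v" "Suc (pos v) \<le> n"
    using far pos_less[of v] v by auto
  have "card_at pos A {pos u..<pos v} \<le> card_at pos S {pos u..<pos v}"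
    using window_cut_left[OF cut small \<open>v \<in> X\<close> uv(1)] .
  moreover have "card_at pos X {Suc (pos u)..<Suc (pos v)} \<le> card_at pos S {Suc (pos u)..<Suc (pos v)}"
    using window_cut_right[OF cut small \<open>u \<in> A\<close>] uv by simp
  moreover have "card_at pos A {pos u..<Suc (pos v)} = card_at pos A {pos u..<pos v}"
    using card_at_split[OF XV(2), of "pos u" "pos v" "Suc (pos v)"] uv
      card_at_position_outside[OF XV(2), of v] v \<open>v \<in> X\<close> by (auto simp: X_def)
  moreover have "card_at pos X {pos u..<Suc (pos v)} = card_at pos X {Suc (pos u)..<Suc (pos v)}"
    using card_at_split[OF XV(1), of "pos u" "pos u" "Suc (pos v)"] uv
      card_at_position_outside[OF XV(1), of u] u \<open>u \<in> A\<close> by (auto simp: X_def)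
  moreover have "card_at pos A {pos u..<Suc (pos v)} + card_at pos S {pos u..<Suc (pos v)}
      + card_at pos X {pos u..<Suc (pos v)} = Suc (pos v) - pos u"
    using window_cut_card_at[OF cut, of "{pos u..<Suc (pos v)}"] uv by fastforce
  ultimately show False
    using far card_at_le_card[OF S, of "{pos u..<pos v}"] card_at_le_card[OF S, of "{pos u..<Suc (pos v)}"]
      card_at_le_card[OF S, of "{Suc (pos u)..<Suc (pos v)}"] by linarith
qed

section \<open>The sparse spanning subgraph\<close>

lemma sparse_subgraph_strongly_connected:
  assumes S: "S \<subseteq> V" "card S < k"
    and conn: "strongly_connected (V - S) (T \<inter> (V - S) \<times> (V - S))"
  shows "strongly_connected (V - S) (sparse_subgraph T pos k \<inter> (V - S) \<times> (V - S))"
  unfolding strongly_connected_def Int_assoc Int_absorb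
proof (intro ballI)
  fix u v assume u: "u \<in> V - S" and v: "v \<in> V - S"
  define D where "D = sparse_subgraph T pos k \<inter> (V - S) \<times> (V - S)"
  define R where "R = D\<^sup>* `` {u}"
  have R: "R \<subseteq> V - S"
    unfolding R_def D_def using u by (intro rtrancl_Image_subset) auto
  have closed: "y \<in> R" if "x \<in> R" "y \<in> V - S" "(x, y) \<in> sparse_subgraph T pos k" for x y
    using that R by (auto simp: R_def D_def intro: rtrancl_into_rtrancl)
  show "(u, v) \<in> D\<^sup>*"
  proof (rule ccontr)
    assume "(u, v) \<notin> D\<^sup>*"
    then have "u \<in> R" "v \<notin> R"
      by (auto simp: R_def)
    moreover have "(u, v) \<in> (T \<inter> (V - S) \<times> (V - S))\<^sup>*"
      using conn u v by (simp add: strongly_connected_def Int_assoc)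
    ultimately obtain x y where "(x, y) \<in> T \<inter> (V - S) \<times> (V - S)" "x \<in> R" "y \<notin> R"
      using rtrancl_leaves_set[of u v "T \<inter> (V - S) \<times> (V - S)" R] by blast
    then have xy: "(x, y) \<in> T" "x \<in> R" "y \<in> V - S - R"
      by auto
    obtain r where r: "r \<in> R" and r_least: "\<forall>z. z \<in> R \<longrightarrow> pos r \<le> pos z"
      using ex_has_least_nat[of "\<lambda>z. z \<in> R" u pos] \<open>u \<in> R\<close> by blast
    obtain q where q: "q \<in> V - S - R" and q_greatest: "\<forall>z. z \<in> V - S - R \<longrightarrow> pos z \<le> pos q"
      using ex_has_greatest_nat[of "\<lambda>z. z \<in> V - S - R" y pos n] xy pos_less by blast
    have "pos r \<le> pos y" "pos x \<le> pos q"
      using arc_leaving_closed_set[OF S R closed xy] r_least q_greatest by fastforce+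
    have "pos q < pos r + 3 * card S"
    proof (rule ccontr)
      assume "\<not> pos q < pos r + 3 * card S"
      then have "(r, q) \<in> (window_arcs T pos (3 * k - 2) \<inter> (V - S) \<times> (V - S))\<^sup>*"
        using S r q R by (intro window_reach) auto
      moreover have "window_arcs T pos (3 * k - 2) \<inter> (V - S) \<times> (V - S) \<subseteq> D"
        by (auto simp: D_def sparse_subgraph_def)
      ultimately have "(r, q) \<in> D\<^sup>*"
        using rtrancl_mono by blast
      then show False
        using r q by (auto simp: R_def intro: rtrancl_trans)
    qed
    moreover have "pos r \<le> pos x" "pos y \<le> pos q"
      using r_least q_greatest xy by auto
    ultimately have "(x, y) \<in> window_arcs T pos (3 * k - 2)"
      using \<open>pos r \<le> pos y\<close> \<open>pos x \<le> pos q\<close> S(2) xy(1) by (auto simp: window_arcs_def)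
    then show False
      using closed xy by (auto simp: sparse_subgraph_def)
  qed
qed

lemma strongly_k_connected_sparse_subgraph:
  assumes "1 \<le> k" and conn: "strongly_k_connected k V T"
  shows "strongly_k_connected k V (sparse_subgraph T pos k)"
  unfolding strongly_k_connected_def
proof (intro conjI allI impI)
  show "k + 1 \<le> card V"
    using conn by (simp add: strongly_k_connected_def)
  fix S assume S: "S \<subseteq> V \<and> card S \<le> k - 1"
  then have "strongly_connected (V - S) (T \<inter> (V - S) \<times> (V - S))"
    using conn by (simp add: strongly_k_connected_def del_verts_def)
  moreover have "card S < k"
    using S assms(1) by linarith
  ultimately show "strongly_connected (fst (del_verts V (sparse_subgraph T pos k) S))
      (snd (del_verts V (sparse_subgraph T pos k) S))"
    using S sparse_subgraph_strongly_connected by (simp add: del_verts_def)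
qed

end

theorem theorem4p2:
  fixes V :: "'a set" and T :: "('a \<times> 'a) set" and k n :: nat
  assumes "k \<ge> 1"
    and "tournament V T"
    and "card V = n"
    and "strongly_k_connected k V T"
  shows "\<exists>D. D \<subseteq> T \<and> strongly_k_connected k V D \<and>
             card D \<le> (5 * k - 2) * n + ((5 * k) choose 2)"
proof -
  obtain pos where "median_order V T n pos"
    using median_order_exists[OF assms(2,3)] by blast
  then interpret median_order V T n pos .
  have "card (sparse_subgraph T pos k) \<le> (5 * k - 2) * n + ((5 * k) choose 2)"
    using card_sparse_subgraph[of k] by linarith
  then show ?thesis
    using sparse_subgraph_subset strongly_k_connected_sparse_subgraph[OF assms(1,4)] by blast
qed

end
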